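(* For fixed integers $n\ge m\ge 3$, the maximal $h$-vector $h_{max}$ of Perazzo algebras with invariants $n,m,d$ is not unimodal for all sufficiently large $d$.
   Context: $K$ algebraically closed of characteristic zero. A Perazzo form of degree $d$ is $F=X_0p_0+\dots+X_np_n+G\in K[X_0,\dots,X_n,U_1,\dots,U_m]_d$ with $p_i\in K[U_1,\dots,U_m]_{d-1}$ algebraically dependent but linearly independent, $G\in K[U_1,\dots,U_m]_d$. The maximal $h$-vector is $h_{max}=(h_0,\dots,h_d)$, symmetric, with $h_i=\min\{\alpha_i+\beta_i,\alpha_i+\gamma_i\}$ for $0\le i\le\lfloor d/2\rfloor$, where $\alpha_i=\binom{m+i-1}{m-1}$, $\beta_i=\binom{d+m-i-1}{m-1}$, $\gamma_i=(n+1)\binom{m+i-2}{m-1}$. Unimodal means $h_0\le\dots\le h_k\ge\dots\ge h_d$ for some $k$. *)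

theory Defs
  imports Main
begin

definition perazzo_alpha :: "nat \<Rightarrow> nat \<Rightarrow> nat" where
  "perazzo_alpha m i = (m + i - 1) choose (m - 1)"

definition perazzo_beta :: "nat \<Rightarrow> nat \<Rightarrow> nat \<Rightarrow> nat" where
  "perazzo_beta m d i = (d + m - i - 1) choose (m - 1)"

definition perazzo_gamma :: "nat \<Rightarrow> nat \<Rightarrow> nat \<Rightarrow> nat" where
  "perazzo_gamma n m i = (n + 1) * ((m + i - 2) choose (m - 1))"

definition hmax :: "nat \<Rightarrow> nat \<Rightarrow> nat \<Rightarrow> nat \<Rightarrow> nat" where
  "hmax n m d i =
     (let low = (\<lambda>j. min (perazzo_alpha m j + perazzo_beta m d j)
                          (perazzo_alpha m j + perazzo_gamma n m j))
      in if i \<le> d div 2 then low i else if i \<le> d then low (d - i) else 0)"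

definition unimodal :: "(nat \<Rightarrow> nat) \<Rightarrow> nat \<Rightarrow> bool" where
  "unimodal h d \<longleftrightarrow> (\<exists>k\<le>d. (\<forall>i j. i \<le> j \<and> j \<le> k \<longrightarrow> h i \<le> h j) \<and>
                              (\<forall>i j. k \<le> i \<and> i \<le> j \<and> j \<le> d \<longrightarrow> h j \<le> h i))"

end

theory Submission
  imports Defs
begin

text \<open>Put t = d div 2 and s = t - 1. For large d the entry h_s equals alpha_s + beta_s:
  beta_s exceeds C(m+s-2, m-1) only by a factor tending to 1, while gamma_s is n + 1 \<ge> 4 times it.
  By Pascal's rule, passing from s to t increases alpha by C(m+s-1, m-2) but decreases beta by
  the strictly larger C(d+m-s-2, m-2) (this needs m \<ge> 3). Hence h_t < h_s = h_(d-s), a strict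
  valley in the middle of the sequence.\<close>

lemma not_unimodal_of_valley:
  assumes "i < j" "j < k" "k \<le> d" "h j < h i" "h j < h k"
  shows "\<not> unimodal h d"
proof
  assume "unimodal h d"
  then obtain p where
    up: "\<And>i j. i \<le> j \<Longrightarrow> j \<le> p \<Longrightarrow> h i \<le> h j" and
    down: "\<And>i j. p \<le> i \<Longrightarrow> i \<le> j \<Longrightarrow> j \<le> d \<Longrightarrow> h j \<le> h i"
    unfolding unimodal_def by blast
  show False
  proof (cases "j \<le> p")
    case True
    then show False using up[of i j] assms by simp
  next
    case False
    then show False using down[of j k] assms by simp
  qed
qed

lemma hmax_low:
  "i \<le> d div 2 \<Longrightarrow>
     hmax n m d i = min (perazzo_alpha m i + perazzo_beta m d i) (perazzo_alpha m i + perazzo_gamma n m i)"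
  by (simp add: hmax_def)

lemma hmax_reflect:
  assumes "d div 2 < i" "i \<le> d"
  shows "hmax n m d i = hmax n m d (d - i)"
proof -
  have "d - i \<le> d div 2" using assms by arith
  then show ?thesis using assms by (simp add: hmax_def Let_def)
qed

lemma choose_Suc_le_five_fourths:
  assumes "5 * k \<le> Suc y"
  shows "4 * (Suc y choose k) \<le> 5 * (y choose k)"
proof -
  have "4 * Suc y \<le> 5 * (Suc y - k)" using assms by simp
  then have "Suc y * (4 * (Suc y choose k)) \<le> 5 * (Suc y - k) * (Suc y choose k)"
    by (metis mult.assoc mult.commute mult_right_mono zero_le)
  also have "\<dots> = Suc y * (5 * (y choose k))"
    using binomial_absorb_comp[of "Suc y" k] by simp
  finally show ?thesis by (simp only: Suc_mult_le_cancel1)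
qed

lemma choose_add_le_pow:
  assumes "5 * k \<le> Suc y"
  shows "4 ^ j * (y + j choose k) \<le> 5 ^ j * (y choose k)"
proof (induction j)
  case (Suc j)
  have "4 ^ Suc j * (y + Suc j choose k) = 4 ^ j * (4 * (Suc (y + j) choose k))" by simp
  also have "\<dots> \<le> 4 ^ j * (5 * (y + j choose k))"
    using choose_Suc_le_five_fourths[of k "y + j"] assms by simp
  also have "\<dots> \<le> 5 ^ Suc j * (y choose k)" using Suc.IH by simp
  finally show ?case .
qed simp

lemma perazzo_beta_le_gamma:
  assumes "3 \<le> n" "d \<le> 2 * s + 3" "4 * m \<le> s + 4"
  shows "perazzo_beta m d s \<le> perazzo_gamma n m s"
proof -
  let ?y = "m + s - 2" and ?k = "m - 1"
  have "perazzo_beta m d s \<le> (?y + 4 choose ?k)"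
    unfolding perazzo_beta_def using assms(2) by (intro binomial_right_mono) simp
  also have "\<dots> \<le> 4 * (?y choose ?k)"
  proof -
    have "4 ^ 4 * (?y + 4 choose ?k) \<le> 5 ^ 4 * (?y choose ?k)"
      using assms(3) by (intro choose_add_le_pow) simp
    then show ?thesis by simp
  qed
  also have "\<dots> \<le> perazzo_gamma n m s"
    unfolding perazzo_gamma_def using assms(1) by (intro mult_right_mono) simp_all
  finally show ?thesis .
qed

lemma perazzo_alpha_beta_Suc_less:
  assumes "3 \<le> m" "2 * s + 2 \<le> d"
  shows "perazzo_alpha m (Suc s) + perazzo_beta m d (Suc s) < perazzo_alpha m s + perazzo_beta m d s"
proof -
  have m: "m - Suc 0 = Suc (m - 2)" "m - 2 = Suc (m - 3)" using assms(1) by simp_all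
  have "perazzo_alpha m (Suc s) = (Suc (m + s - 1) choose Suc (m - 2))"
    unfolding perazzo_alpha_def using assms(1) by (simp add: m(1))
  then have alpha: "perazzo_alpha m (Suc s) = perazzo_alpha m s + (m + s - 1 choose (m - 2))"
    by (simp add: perazzo_alpha_def m(1))
  have "perazzo_beta m d s = (Suc (d + m - s - 2) choose Suc (m - 2))"
    unfolding perazzo_beta_def using assms by (simp add: m(1) Suc_diff_Suc)
  then have beta: "perazzo_beta m d s = perazzo_beta m d (Suc s) + (d + m - s - 2 choose (m - 2))"
    by (simp add: perazzo_beta_def m(1))
  have "(Suc (m + s - 1) choose Suc (m - 3))
        = (m + s - 1 choose (m - 3)) + (m + s - 1 choose (m - 2))"
    by (simp add: m(2))
  then have "(m + s - 1 choose (m - 2)) < (Suc (m + s - 1) choose (m - 2))"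
    by (simp add: m(2))
  also have "\<dots> \<le> (d + m - s - 2 choose (m - 2))"
    using assms by (intro binomial_right_mono) simp
  finally show ?thesis using alpha beta by linarith
qed

theorem theorem3p6:
  fixes n m :: nat
  assumes "3 \<le> m" and "m \<le> n"
  shows "\<exists>D. \<forall>d\<ge>D. \<not> unimodal (hmax n m d) d"
proof (intro exI allI impI)
  fix d assume "8 * m \<le> d"
  define s where "s = d div 2 - 1"
  have s: "Suc s = d div 2" "2 * s + 2 \<le> d" "d \<le> 2 * s + 3" "4 * m \<le> s + 4"
    using \<open>8 * m \<le> d\<close> \<open>3 \<le> m\<close> unfolding s_def by auto
  have hs: "hmax n m d s = perazzo_alpha m s + perazzo_beta m d s"
    using hmax_low[of s d n m] perazzo_beta_le_gamma[of n d s m] s assms by simp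
  have "hmax n m d (Suc s) < hmax n m d s"
    using hmax_low[of "Suc s" d n m] perazzo_alpha_beta_Suc_less[OF assms(1) s(2)] hs s(1)
    by linarith
  moreover have "hmax n m d (d - s) = hmax n m d s"
    using hmax_reflect[of d "d - s" n m] s by simp
  ultimately show "\<not> unimodal (hmax n m d) d"
    using not_unimodal_of_valley[of s "Suc s" "d - s" d "hmax n m d"] s by simp
qed

end
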